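(* Consider the network $N$ described in the context, with $3f < n \le 5f$. Let $X \in (A,B)$. Suppose the robots run any deterministic cautious algorithm. - If all Byzantine robots are located in $[A,X]$, then whenever the robots of $SetA$ are activated, their computed destinations lie in $[A,X]$. - Symmetrically, if all Byzantine robots are located in $[X,B]$, then whenever the robots of $SetB$ are activated, their computed destinations lie in $[X,B]$.
   Context: Model: robots on the real line in the ATOM model (each activated robot performs a full Look–Compute–Move cycle atomically). Robots are anonymous (same deterministic program), oblivious, have no common orientation, and have unlimited visibility with strong multiplicity detection (an observation is the multiset of all positions). Byzantine robots behave arbitrarily, with positions chosen by the adversary. Network $N$: there are $n$ robots, exactly $f$ of which are Byzantine, and $A<B$ are two points. - $SetA$: $f$ correct robots located at $A$. - $SetB$: $f$ correct robots located at $B$. - $SetX$: the remaining $n-3f$ correct robots, all at a common point $X \in (A,B)$. Cautious algorithm: for every time $t$ and every correct robot $i$, the last computed destination $D_i(t)$ lies in $[\min U^i(t), \max U^i(t)]$, where $U^i(t)$ is the multiset of positions of the correct robots in robot $i$'s last observation. In addition, whenever the correct robots are not all colocated, some correct robot later has a destination different from its position. *)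

theory Defs
  imports Complex_Main "HOL-Library.Multiset"
begin

text \<open>A deterministic algorithm, executed in the robot's local coordinate system:
  it maps the observed multiset of positions (all n robots, strong multiplicity
  detection) and the robot's own position to a destination.\<close>
type_synonym algorithm = "real multiset \<Rightarrow> real \<Rightarrow> real"

text \<open>A local frame (a, b) with a \<noteq> 0: local coordinate of x is a*x+b
  (no common orientation, origin or unit).\<close>
definition valid_frame :: "real \<times> real \<Rightarrow> bool" where
  "valid_frame fr \<longleftrightarrow> fst fr \<noteq> 0"

definition to_local :: "real \<times> real \<Rightarrow> real \<Rightarrow> real" where
  "to_local fr x = fst fr * x + snd fr"

definition to_global :: "real \<times> real \<Rightarrow> real \<Rightarrow> real" where
  "to_global fr y = (y - snd fr) / fst fr"

definition destination :: "algorithm \<Rightarrow> real \<times> real \<Rightarrow> real multiset \<Rightarrow> real \<Rightarrow> real" where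
  "destination alg fr obs p = to_global fr (alg (image_mset (to_local fr) obs) (to_local fr p))"

text \<open>Cautious (safety part): whenever the correct robots occupy C (n-f robots) and the
  f Byzantine robots occupy Z, any correct robot computes a destination in the
  hull of the correct positions, whatever its local frame.\<close>
definition cautious :: "nat \<Rightarrow> nat \<Rightarrow> algorithm \<Rightarrow> bool" where
  "cautious n f alg \<longleftrightarrow>
     (\<forall>C Z p fr. size C = n - f \<and> size Z = f \<and> p \<in># C \<and> valid_frame fr \<longrightarrow>
        destination alg fr (C + Z) p \<in> {Min (set_mset C) .. Max (set_mset C)})"

text \<open>Observation in network N: SetA (f at A), SetB (f at B), SetX (n-3f at X), Byzantine at Z.\<close>
definition network_obs :: "nat \<Rightarrow> nat \<Rightarrow> real \<Rightarrow> real \<Rightarrow> real \<Rightarrow> real multiset \<Rightarrow> real multiset" where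
  "network_obs n f A B X Z =
     replicate_mset f A + replicate_mset f B + replicate_mset (n - 3 * f) X + Z"

end

theory Submission
  imports Defs
begin

text \<open>A robot of SetA cannot tell its configuration apart from one in which the f robots of
  SetB are the Byzantine ones and the f robots in [A,X] are correct. In that reading all
  correct robots lie in [A,X], so cautiousness confines the destination to [A,X];
  symmetrically for SetB.\<close>

lemma cautious_destination_in_interval:
  assumes "cautious n f alg" and "valid_frame fr"
    and "size C = n - f" and "size Z = f" and "p \<in># C"
    and "set_mset C \<subseteq> {a..b}"
  shows "destination alg fr (C + Z) p \<in> {a..b}"
proof -
  have "destination alg fr (C + Z) p \<in> {Min (set_mset C) .. Max (set_mset C)}"
    using assms(1-5) unfolding cautious_def by blast
  moreover have "Min (set_mset C) \<in> set_mset C" "Max (set_mset C) \<in> set_mset C"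
    using \<open>p \<in># C\<close> by (auto intro: Min_in Max_in)
  ultimately show ?thesis
    using assms(6) by force
qed

lemma cautious_destination_ignores_far_group:
  assumes "cautious n f alg" and "valid_frame fr" and "3 * f < n" and "f > 0"
    and "size Z = f" and "set_mset Z \<subseteq> {a..b}" and "P \<in> {a..b}" and "X \<in> {a..b}"
  shows "destination alg fr
           (replicate_mset f P + replicate_mset f Q + replicate_mset (n - 3 * f) X + Z) P
         \<in> {a..b}"
proof -
  let ?C = "replicate_mset f P + replicate_mset (n - 3 * f) X + Z"
  have "replicate_mset f P + replicate_mset f Q + replicate_mset (n - 3 * f) X + Z
        = ?C + replicate_mset f Q"
    by (simp add: add_ac)
  moreover have "destination alg fr (?C + replicate_mset f Q) P \<in> {a..b}"
    using cautious_destination_in_interval[OF assms(1,2), of ?C] assms(3-8) by auto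
  ultimately show ?thesis by (simp only:)
qed

theorem lemma1:
  fixes n f :: nat and A B X :: real and alg :: algorithm
  assumes "3 * f < n" and "n \<le> 5 * f"
    and "A < B" and "A < X" and "X < B"
    and "cautious n f alg"
  shows "(\<forall>Z fr. size Z = f \<and> set_mset Z \<subseteq> {A..X} \<and> valid_frame fr \<longrightarrow>
            destination alg fr (network_obs n f A B X Z) A \<in> {A..X})
       \<and> (\<forall>Z fr. size Z = f \<and> set_mset Z \<subseteq> {X..B} \<and> valid_frame fr \<longrightarrow>
            destination alg fr (network_obs n f A B X Z) B \<in> {X..B})"
proof -
  have "f > 0" using assms(1,2) by linarith
  note far_group = cautious_destination_ignores_far_group[OF assms(6) _ assms(1) \<open>f > 0\<close>]
  show ?thesis
  proof (intro conjI allI impI; elim conjE)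
    fix Z fr
    assume "size Z = f" "set_mset Z \<subseteq> {A..X}" "valid_frame fr"
    then show "destination alg fr (network_obs n f A B X Z) A \<in> {A..X}"
      using far_group[of fr Z A X A X B] assms(4) by (simp add: network_obs_def)
  next
    fix Z fr
    assume "size Z = f" "set_mset Z \<subseteq> {X..B}" "valid_frame fr"
    moreover have "network_obs n f A B X Z =
        replicate_mset f B + replicate_mset f A + replicate_mset (n - 3 * f) X + Z"
      by (simp add: network_obs_def add_ac)
    ultimately show "destination alg fr (network_obs n f A B X Z) B \<in> {X..B}"
      using far_group[of fr Z X B B X A] assms(5) by simp
  qed
qed

end
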